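(* If $G$ is a finite graph that does not contain $K_{t,t}$ as a subgraph, then \[\deg(G)/(2t^2)<\mathrm{fw}_1(G)\le(\deg(G)+1)^t.\] Consequently, if $\mathcal C$ is a weakly sparse class of graphs, then $\sup_{G\in\mathcal C}\mathrm{fw}_1(G)<\infty$ if and only if $\mathcal C$ has bounded degeneracy.
   Context: Graphs are finite, simple, undirected. $\deg(G)$ (degeneracy) is the least $d$ such that some total order of $V(G)$ has every vertex with at most $d$ earlier neighbours. A class is weakly sparse if there is $t$ such that no graph in it contains $K_{t,t}$ as a subgraph. A $k$-flip of $G$ is obtained by choosing a partition $\mathcal P$ of $V(G)$ with at most $k$ parts and, for some pairs $A,B$ of (possibly equal) parts, inverting adjacency of every pair of distinct $x\in A,y\in B$. Flipper game of radius $1$ and width $k$: $G_0=G$, runner chooses $v_0$; in round $i\ge1$ the flipper announces a $k$-flip $G_i$ of $G$, the runner moves from $v_{i-1}$ to $v_i$ equal or adjacent to $v_{i-1}$ in $G_{i-1}$; the flipper wins if $v_i$ is isolated in $G_i$. $\mathrm{fw}_1(G)$ is the least $k$ for which the flipper has a winning strategy. *)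

theory Defs
  imports Complex_Main "HOL-Library.Disjoint_Sets"
begin

type_synonym 'a graph = "'a set \<times> ('a \<Rightarrow> 'a \<Rightarrow> bool)"

definition fin_graph :: "'a graph \<Rightarrow> bool" where
  "fin_graph G \<longleftrightarrow> finite (fst G)
     \<and> (\<forall>x y. snd G x y \<longrightarrow> x \<in> fst G \<and> y \<in> fst G \<and> x \<noteq> y)
     \<and> (\<forall>x y. snd G x y \<longrightarrow> snd G y x)"

text \<open>Degeneracy: least d such that some total order (given by an injection into nat)
  has every vertex with at most d earlier neighbours.\<close>
definition degeneracy :: "'a graph \<Rightarrow> nat" where
  "degeneracy G = (LEAST d. \<exists>f :: 'a \<Rightarrow> nat. inj_on f (fst G) \<and>
      (\<forall>v \<in> fst G. card {u \<in> fst G. snd G u v \<and> f u < f v} \<le> d))"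

definition contains_Ktt :: "'a graph \<Rightarrow> nat \<Rightarrow> bool" where
  "contains_Ktt G t \<longleftrightarrow> (\<exists>A B. A \<subseteq> fst G \<and> B \<subseteq> fst G \<and> A \<inter> B = {} \<and>
      card A = t \<and> card B = t \<and> (\<forall>a \<in> A. \<forall>b \<in> B. snd G a b))"

definition weakly_sparse :: "'a graph set \<Rightarrow> bool" where
  "weakly_sparse C \<longleftrightarrow> (\<exists>t. \<forall>G \<in> C. \<not> contains_Ktt G t)"

definition is_flip :: "nat \<Rightarrow> 'a graph \<Rightarrow> 'a graph \<Rightarrow> bool" where
  "is_flip k G H \<longleftrightarrow> (\<exists>P F. partition_on (fst G) P \<and> card P \<le> k \<and>
      F \<subseteq> P \<times> P \<and> (\<forall>A B. (A, B) \<in> F \<longrightarrow> (B, A) \<in> F) \<and>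
      fst H = fst G \<and>
      (\<forall>x y. snd H x y \<longleftrightarrow> (x \<in> fst G \<and> y \<in> fst G \<and> x \<noteq> y \<and>
          (snd G x y \<noteq> (\<exists>A B. (A, B) \<in> F \<and> x \<in> A \<and> y \<in> B)))))"

definition isolated :: "'a graph \<Rightarrow> 'a \<Rightarrow> bool" where
  "isolated H v \<longleftrightarrow> (\<forall>u. \<not> snd H v u)"

text \<open>Flipper wins (in finitely many rounds) the radius-1 width-k game on G from the
  position where the current graph is H and the runner is at v (the runner moves next
  along edges of H, after the flipper announces the next flip).\<close>
inductive flipper_wins :: "'a graph \<Rightarrow> nat \<Rightarrow> 'a graph \<Rightarrow> 'a \<Rightarrow> bool"
  for G :: "'a graph" and k :: nat where
  step: "\<lbrakk> is_flip k G H';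
           \<forall>v'. (v' = v \<or> snd H v v') \<longrightarrow> isolated H' v' \<or> flipper_wins G k H' v' \<rbrakk>
         \<Longrightarrow> flipper_wins G k H v"

definition flipper_has_winning_strategy :: "'a graph \<Rightarrow> nat \<Rightarrow> bool" where
  "flipper_has_winning_strategy G k \<longleftrightarrow> (\<forall>v0 \<in> fst G. flipper_wins G k G v0)"

definition fw1 :: "'a graph \<Rightarrow> nat" where
  "fw1 G = (LEAST k. flipper_has_winning_strategy G k)"

end

theory Submission
  imports Defs
begin

text \<open>
  Upper bound: fix an ordering of the vertices in which every vertex has at most d = deg(G)
  earlier neighbours. When the runner is at v, the flipper isolates a set X of at most d vertices,
  namely v together with the earlier neighbours still adjacent to v if one of them has already
  been cut off, and X = {v} otherwise. Isolating X is a (d + 1)^t-flip: its parts are the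
  singletons of X and the classes of vertices outside X with the same neighbourhood in X, and since
  G has no K_{t,t}, each t-subset of X lies in at most t - 1 of these neighbourhoods, which bounds
  their number by a Sauer-Shelah type count.

  Lower bound: G has a nonempty subgraph U of minimum degree at least deg(G). If deg(G) is at least
  2 t^2 k, the runner can stay in U with more than (t - 1) k neighbours in U after every k-flip:
  t of its current neighbours lie in one part of the next flip and so see the same set W flipped,
  and if each of them kept at most (t - 1) k neighbours in U, they would have t common neighbours
  in U, a K_{t,t}.
\<close>

section \<open>Families in which every t-set has few supersets\<close>

fun family_bound :: "nat \<Rightarrow> nat \<Rightarrow> nat \<Rightarrow> nat" where
  "family_bound s 0 m = m"
| "family_bound 0 (Suc t) m = 1"
| "family_bound (Suc s) (Suc t) m = family_bound s (Suc t) m + family_bound s t m"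

lemma card_split_at_point:
  assumes "finite \<T>"
  shows "card \<T> = card {T\<in>\<T>. x \<notin> T} + card ((\<lambda>T. T - {x}) ` {T\<in>\<T>. x \<in> T})"
proof -
  have "inj_on (\<lambda>T. T - {x}) {T\<in>\<T>. x \<in> T}" unfolding inj_on_def by blast
  moreover have "\<T> = {T\<in>\<T>. x \<notin> T} \<union> {T\<in>\<T>. x \<in> T}" by auto
  ultimately show ?thesis
    using assms card_Un_disjoint[of "{T\<in>\<T>. x \<notin> T}" "{T\<in>\<T>. x \<in> T}"]
    by (simp add: card_image disjoint_iff)
qed

lemma containing_bound_after_removal:
  assumes "finite \<T>" and "finite X" and "x \<notin> X"
    and "\<forall>S\<subseteq>insert x X. card S = Suc t \<longrightarrow> card {T\<in>\<T>. S \<subseteq> T} \<le> m"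
  shows "\<forall>S\<subseteq>X. card S = t \<longrightarrow> card {T \<in> (\<lambda>T. T - {x}) ` {T\<in>\<T>. x \<in> T}. S \<subseteq> T} \<le> m"
proof (intro allI impI)
  fix S assume S: "S \<subseteq> X" "card S = t"
  then have "x \<notin> S" and "finite S" using assms(2,3) finite_subset by auto
  then have "card (insert x S) = Suc t" using S(2) by simp
  moreover have "insert x S \<subseteq> insert x X" using S(1) by blast
  ultimately have "card {T\<in>\<T>. insert x S \<subseteq> T} \<le> m" using assms(4) by blast
  moreover have "{T \<in> (\<lambda>T. T - {x}) ` {T\<in>\<T>. x \<in> T}. S \<subseteq> T} = (\<lambda>T. T - {x}) ` {T\<in>\<T>. insert x S \<subseteq> T}"
    using \<open>x \<notin> S\<close> by auto
  ultimately show "card {T \<in> (\<lambda>T. T - {x}) ` {T\<in>\<T>. x \<in> T}. S \<subseteq> T} \<le> m"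
    using assms(1) card_image_le[of "{T\<in>\<T>. insert x S \<subseteq> T}" "\<lambda>T. T - {x}"] by simp
qed

lemma card_family_le_family_bound:
  assumes "finite X" and "\<T> \<subseteq> Pow X"
    and "\<forall>S\<subseteq>X. card S = t \<longrightarrow> card {T\<in>\<T>. S \<subseteq> T} \<le> m"
  shows "card \<T> \<le> family_bound (card X) t m"
  using assms
proof (induction X arbitrary: \<T> t rule: finite_induct)
  case empty
  show ?case
  proof (cases t)
    case 0
    with empty(2) show ?thesis by simp
  next
    case Suc
    have "\<T> \<subseteq> {{}}" using empty(1) by auto
    then have "card \<T> \<le> 1" using card_mono[of "{{}}" \<T>] by simp
    with Suc show ?thesis by simp
  qed
next
  case (insert x X)
  have fin: "finite \<T>" using insert(1,4) finite_subset by auto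
  show ?case
  proof (cases t)
    case 0
    with insert(5)[rule_format, of "{}"] show ?thesis by simp
  next
    case (Suc t')
    have "card {T\<in>\<T>. x \<notin> T} \<le> family_bound (card X) t m"
    proof (rule insert.IH)
      show "\<forall>S\<subseteq>X. card S = t \<longrightarrow> card {T\<in>{T\<in>\<T>. x \<notin> T}. S \<subseteq> T} \<le> m"
      proof (intro allI impI)
        fix S assume "S \<subseteq> X" "card S = t"
        then have "card {T\<in>\<T>. S \<subseteq> T} \<le> m" using insert(5) by blast
        moreover have "card {T\<in>{T\<in>\<T>. x \<notin> T}. S \<subseteq> T} \<le> card {T\<in>\<T>. S \<subseteq> T}"
          using fin by (intro card_mono) auto
        ultimately show "card {T\<in>{T\<in>\<T>. x \<notin> T}. S \<subseteq> T} \<le> m" by linarith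
      qed
    qed (use insert(4) in auto)
    moreover have "card ((\<lambda>T. T - {x}) ` {T\<in>\<T>. x \<in> T}) \<le> family_bound (card X) t' m"
    proof (rule insert.IH)
      show "\<forall>S\<subseteq>X. card S = t' \<longrightarrow> card {T \<in> (\<lambda>T. T - {x}) ` {T\<in>\<T>. x \<in> T}. S \<subseteq> T} \<le> m"
        using containing_bound_after_removal[OF fin insert(1,2)] insert(5) Suc by simp
    qed (use insert(4) in auto)
    ultimately show ?thesis using card_split_at_point[OF fin, of x] Suc insert(1,2) by simp
  qed
qed

lemma family_bound_le: "1 \<le> m \<Longrightarrow> family_bound s t m \<le> m * (s + 1) ^ t"
proof (induction s t m rule: family_bound.induct)
  case (3 s t m)
  then have "family_bound (Suc s) (Suc t) m \<le> m * (s + 1) ^ Suc t + m * (s + 1) ^ t" by simp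
  also have "\<dots> = m * (s + 1) ^ t * (s + 2)" by (simp add: algebra_simps)
  also have "\<dots> \<le> m * (s + 2) ^ t * (s + 2)" by (intro mult_right_mono mult_left_mono power_mono) auto
  finally show ?case by (simp add: algebra_simps)
qed simp_all

lemma binomial_two_terms_le: "(s + 1) ^ Suc t + Suc t * (s + 1) ^ t \<le> (s + 2 :: nat) ^ Suc t"
proof (induction t)
  case (Suc t)
  have "(s + 1) ^ Suc (Suc t) + Suc (Suc t) * (s + 1) ^ Suc t
      = (s + 1) * ((s + 1) ^ Suc t + Suc t * (s + 1) ^ t) + (s + 1) ^ Suc t"
    by (simp add: algebra_simps)
  also have "\<dots> \<le> (s + 1) * (s + 2) ^ Suc t + (s + 2) ^ Suc t"
    using Suc by (intro add_mono mult_left_mono power_mono) auto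
  also have "\<dots> = (s + 2) ^ Suc (Suc t)" by (simp add: algebra_simps)
  finally show ?case .
qed simp

lemma add_family_bound_le:
  assumes "2 \<le> t" and "1 \<le> m" and "m \<le> t - 1"
  shows "s + family_bound s t m \<le> (s + 1) ^ t"
proof (induction s)
  case 0
  from assms show ?case by (cases t) auto
next
  case (Suc s)
  obtain t' where t: "t = Suc t'" using assms by (cases t) auto
  have "Suc s + family_bound (Suc s) t m = (s + family_bound s t m) + 1 + family_bound s t' m"
    using t by simp
  also have "\<dots> \<le> (s + 1) ^ t + 1 + m * (s + 1) ^ t'"
    using Suc family_bound_le assms(2) by (intro add_mono) auto
  also have "\<dots> \<le> (s + 1) ^ t + (s + 1) ^ t' + t' * (s + 1) ^ t'"
  proof -
    have "m * (s + 1) ^ t' \<le> t' * (s + 1) ^ t'" using assms(3) t by simp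
    moreover have "1 \<le> (s + 1) ^ t'" by simp
    ultimately show ?thesis by linarith
  qed
  also have "\<dots> \<le> (Suc s + 1) ^ t" using binomial_two_terms_le[of s t'] t by (simp add: add_ac)
  finally show ?case .
qed

section \<open>Flips\<close>

definition remove_edges_at :: "'a set \<Rightarrow> ('a \<Rightarrow> 'a \<Rightarrow> bool) \<Rightarrow> 'a \<Rightarrow> 'a \<Rightarrow> bool" where
  "remove_edges_at X E = (\<lambda>y z. E y z \<and> y \<notin> X \<and> z \<notin> X)"

lemma not_contains_Ktt_pos:
  assumes "\<not> contains_Ktt G t"
  shows "0 < t"
proof (rule ccontr)
  assume "\<not> 0 < t"
  then have "contains_Ktt G t" unfolding contains_Ktt_def by (intro exI[of _ "{}"]) auto
  with assms show False ..
qed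

lemma is_flip_partition_uniform:
  assumes "is_flip k (V, E) H"
  obtains P where "partition_on V P" and "card P \<le> k"
    and "\<forall>Q\<in>P. \<exists>W. \<forall>a\<in>Q. \<forall>y. snd H a y \<longleftrightarrow> y \<in> V \<and> a \<noteq> y \<and> (E a y \<noteq> (y \<in> W))"
proof -
  obtain P F where P: "partition_on V P" "card P \<le> k" and FP: "F \<subseteq> P \<times> P"
    and adj: "\<forall>x y. snd H x y \<longleftrightarrow> x \<in> V \<and> y \<in> V \<and> x \<noteq> y \<and>
          (E x y \<noteq> (\<exists>A B. (A, B) \<in> F \<and> x \<in> A \<and> y \<in> B))"
    using assms unfolding is_flip_def by auto
  have uniform: "\<exists>W. \<forall>a\<in>Q. \<forall>y. snd H a y \<longleftrightarrow> y \<in> V \<and> a \<noteq> y \<and> (E a y \<noteq> (y \<in> W))"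
    if Q: "Q \<in> P" for Q
  proof (rule exI[of _ "\<Union>{B. (Q, B) \<in> F}"], intro ballI allI)
    fix a y assume a: "a \<in> Q"
    have "(\<exists>A B. (A, B) \<in> F \<and> a \<in> A \<and> y \<in> B) \<longleftrightarrow> (\<exists>B. (Q, B) \<in> F \<and> y \<in> B)"
      using a Q FP disjointD[OF partition_onD2[OF P(1)]] by blast
    moreover have "a \<in> V" using a Q partition_onD1[OF P(1)] by blast
    ultimately show "snd H a y \<longleftrightarrow> y \<in> V \<and> a \<noteq> y \<and> (E a y \<noteq> (y \<in> \<Union>{B. (Q, B) \<in> F}))"
      using adj by auto
  qed
  show ?thesis by (rule that[OF P ballI[OF uniform]])
qed

locale finite_graph =
  fixes V :: "'a set" and E :: "'a \<Rightarrow> 'a \<Rightarrow> bool"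
  assumes fin_graph: "fin_graph (V, E)"
begin

lemma finite_V: "finite V"
  using fin_graph by (simp add: fin_graph_def)

lemma edge_sym: "E x y \<Longrightarrow> E y x"
  using fin_graph by (simp add: fin_graph_def)

lemma edgeD: "E x y \<Longrightarrow> x \<in> V \<and> y \<in> V \<and> x \<noteq> y"
  using fin_graph by (simp add: fin_graph_def)

lemma is_flip_homogeneous:
  fixes \<tau> :: "'a \<Rightarrow> 'b"
  assumes card: "card (\<tau> ` V) \<le> k"
    and sym: "\<And>y z. R y z \<Longrightarrow> R z y"
    and homogeneous: "\<And>y y' z z'. \<lbrakk>y \<in> V; y' \<in> V; z \<in> V; z' \<in> V; \<tau> y = \<tau> y'; \<tau> z = \<tau> z'; R y z\<rbrakk>
      \<Longrightarrow> R y' z'"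
  shows "is_flip k (V, E) (V, \<lambda>x y. x \<in> V \<and> y \<in> V \<and> x \<noteq> y \<and> (E x y \<noteq> R x y))"
proof -
  define cls where "cls c = {y\<in>V. \<tau> y = c}" for c
  define P where "P = cls ` \<tau> ` V"
  define F where "F = {(A, B). A \<in> P \<and> B \<in> P \<and> (\<exists>y\<in>A. \<exists>z\<in>B. R y z)}"
  have "partition_on V P"
    by (rule partition_onI) (auto simp: P_def cls_def disjnt_def)
  moreover have "card P \<le> k"
    using card card_image_le[OF finite_imageI[OF finite_V], of cls \<tau>] unfolding P_def by linarith
  moreover have flipped: "(\<exists>A B. (A, B) \<in> F \<and> y \<in> A \<and> z \<in> B) \<longleftrightarrow> R y z" if "y \<in> V" "z \<in> V" for y z
  proof
    assume "\<exists>A B. (A, B) \<in> F \<and> y \<in> A \<and> z \<in> B"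
    then obtain y' z' where "y' \<in> V" "z' \<in> V" "\<tau> y' = \<tau> y" "\<tau> z' = \<tau> z" "R y' z'"
      unfolding F_def P_def cls_def by auto
    then show "R y z" using that homogeneous by blast
  next
    assume "R y z"
    then have "(cls (\<tau> y), cls (\<tau> z)) \<in> F \<and> y \<in> cls (\<tau> y) \<and> z \<in> cls (\<tau> z)"
      unfolding F_def P_def cls_def using that by blast
    then show "\<exists>A B. (A, B) \<in> F \<and> y \<in> A \<and> z \<in> B" by blast
  qed
  moreover have "F \<subseteq> P \<times> P" "\<forall>A B. (A, B) \<in> F \<longrightarrow> (B, A) \<in> F"
    unfolding F_def using sym by blast+
  moreover have "(x \<in> V \<and> y \<in> V \<and> x \<noteq> y \<and> (E x y \<noteq> R x y)) \<longleftrightarrow>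
      (x \<in> V \<and> y \<in> V \<and> x \<noteq> y \<and> (E x y \<noteq> (\<exists>A B. (A, B) \<in> F \<and> x \<in> A \<and> y \<in> B)))" for x y
    using flipped[of x y] by blast
  ultimately show ?thesis
    unfolding is_flip_def by (intro exI[of _ P] exI[of _ F]) simp
qed

definition traces :: "'a set \<Rightarrow> 'a set set" where
  "traces X = (\<lambda>y. {x\<in>X. E y x}) ` (V - X)"

lemma is_flip_remove_edges_at:
  assumes X: "X \<subseteq> V" and card: "card X + card (traces X) \<le> k"
  shows "is_flip k (V, E) (V, remove_edges_at X E)"
proof -
  define \<tau> where "\<tau> y = (if y \<in> X then Inl y else Inr {x\<in>X. E y x})" for y
  define R where "R y z \<longleftrightarrow> E y z \<and> (y \<in> X \<or> z \<in> X)" for y z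
  have finite_X: "finite X" using X finite_V by (rule finite_subset)
  have "card (\<tau> ` V) \<le> card (Inl ` X \<union> Inr ` traces X :: ('a + 'a set) set)"
    using finite_X finite_V unfolding \<tau>_def traces_def by (intro card_mono) auto
  also have "\<dots> \<le> k"
    using card card_Un_le[of "Inl ` X" "Inr ` traces X :: ('a + 'a set) set"]
    by (simp add: card_image)
  finally have "card (\<tau> ` V) \<le> k" .
  moreover have "R y z \<Longrightarrow> R z y" for y z
    unfolding R_def using edge_sym by blast
  moreover have "R y' z'" if "\<tau> y = \<tau> y'" "\<tau> z = \<tau> z'" "R y z" for y y' z z'
  proof -
    have same_in: "u' = u" if "\<tau> u = \<tau> u'" "u \<in> X" for u u'
      using that unfolding \<tau>_def by (auto split: if_splits)
    have same_out: "u' \<notin> X \<and> (\<forall>x\<in>X. E u x \<longleftrightarrow> E u' x)" if "\<tau> u = \<tau> u'" "u \<notin> X" for u u'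
      using that unfolding \<tau>_def by (auto split: if_splits)
    show ?thesis
      using that same_in same_out edge_sym unfolding R_def by metis
  qed
  ultimately have "is_flip k (V, E) (V, \<lambda>x y. x \<in> V \<and> y \<in> V \<and> x \<noteq> y \<and> (E x y \<noteq> R x y))"
    by (rule is_flip_homogeneous)
  moreover have "(\<lambda>x y. x \<in> V \<and> y \<in> V \<and> x \<noteq> y \<and> (E x y \<noteq> R x y)) = remove_edges_at X E"
    unfolding remove_edges_at_def R_def using edgeD by (intro ext) blast
  ultimately show ?thesis by simp
qed

lemma is_flip_self:
  assumes "1 \<le> k"
  shows "is_flip k (V, E) (V, E)"
proof -
  have "traces {} \<subseteq> {{}}" unfolding traces_def by auto
  then have "card (traces {}) \<le> 1" using card_mono[of "{{}}" "traces {}"] by simp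
  with assms have "is_flip k (V, E) (V, remove_edges_at {} E)"
    by (intro is_flip_remove_edges_at) simp_all
  then show ?thesis by (simp add: remove_edges_at_def)
qed

lemma card_traces_containing_less:
  assumes "\<not> contains_Ktt (V, E) t" and X: "X \<subseteq> V" "S \<subseteq> X" and "card S = t"
  shows "card {T\<in>traces X. S \<subseteq> T} < t"
proof (rule ccontr)
  define B where "B = {y\<in>V - X. S \<subseteq> {x\<in>X. E y x}}"
  have "{T\<in>traces X. S \<subseteq> T} = (\<lambda>y. {x\<in>X. E y x}) ` B"
    unfolding traces_def B_def by auto
  moreover have "finite B" unfolding B_def using finite_V by simp
  ultimately have "card {T\<in>traces X. S \<subseteq> T} \<le> card B" by (simp add: card_image_le)
  moreover assume "\<not> card {T\<in>traces X. S \<subseteq> T} < t"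
  ultimately have "t \<le> card B" by linarith
  then obtain B' where B': "B' \<subseteq> B" "card B' = t" by (meson obtain_subset_with_card_n)
  have "S \<inter> B' = {}" "S \<subseteq> V" "B' \<subseteq> V"
    using X B'(1) unfolding B_def by auto
  moreover have "\<forall>a\<in>S. \<forall>b\<in>B'. E a b"
    using B'(1) edge_sym unfolding B_def by blast
  ultimately have "contains_Ktt (V, E) t"
    unfolding contains_Ktt_def using assms(4) B'(2) by auto
  with assms(1) show False ..
qed

lemma is_flip_remove_edges_at_small:
  assumes "\<not> contains_Ktt (V, E) t" and "2 \<le> t" and X: "X \<subseteq> V" "card X \<le> d"
  shows "is_flip ((d + 1) ^ t) (V, E) (V, remove_edges_at X E)"
proof (rule is_flip_remove_edges_at[OF X(1)])
  have "finite X" using X(1) finite_V by (rule finite_subset)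
  moreover have "traces X \<subseteq> Pow X" unfolding traces_def by auto
  moreover have "card {T\<in>traces X. S \<subseteq> T} \<le> t - 1" if "S \<subseteq> X" "card S = t" for S
    using card_traces_containing_less[OF assms(1) X(1) that] by linarith
  ultimately have "card (traces X) \<le> family_bound (card X) t (t - 1)"
    by (intro card_family_le_family_bound) auto
  then have "card X + card (traces X) \<le> (card X + 1) ^ t"
    using add_family_bound_le[of t "t - 1" "card X"] assms(2) by linarith
  also have "\<dots> \<le> (d + 1) ^ t" using X(2) by (simp add: power_mono)
  finally show "card X + card (traces X) \<le> (d + 1) ^ t" .
qed

end

section \<open>Degeneracy\<close>

lemma degeneracy_le:
  assumes "inj_on (f :: 'a \<Rightarrow> nat) V" and "\<forall>v\<in>V. card {u\<in>V. E u v \<and> f u < f v} \<le> d"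
  shows "degeneracy (V, E) \<le> d"
  unfolding degeneracy_def using assms by (intro Least_le) auto

lemma degeneracy_ordering:
  assumes "finite V"
  obtains f :: "'a \<Rightarrow> nat"
  where "inj_on f V" and "\<forall>v\<in>V. card {u\<in>V. E u v \<and> f u < f v} \<le> degeneracy (V, E)"
proof -
  define ok where "ok d \<longleftrightarrow> (\<exists>f :: 'a \<Rightarrow> nat. inj_on f V \<and> (\<forall>v\<in>V. card {u\<in>V. E u v \<and> f u < f v} \<le> d))"
    for d
  obtain f :: "'a \<Rightarrow> nat" where "inj_on f V" using assms finite_imp_inj_to_nat_seg by blast
  then have "ok (card V)" unfolding ok_def using assms by (blast intro: card_mono)
  then have "ok (LEAST d. ok d)" by (rule LeastI)
  then show ?thesis using that unfolding ok_def degeneracy_def by auto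
qed

lemma exists_ordering_few_earlier:
  assumes "finite W" and "\<forall>U\<subseteq>W. U \<noteq> {} \<longrightarrow> (\<exists>u\<in>U. card {w\<in>U. E w u} \<le> c)"
  shows "\<exists>f :: 'a \<Rightarrow> nat. inj_on f W \<and> (\<forall>v\<in>W. card {u\<in>W. E u v \<and> f u < f v} \<le> c)"
  using assms
proof (induction W rule: finite_psubset_induct)
  case (psubset W)
  show ?case
  proof (cases "W = {}")
    case False
    then obtain u where u: "u \<in> W" "card {w\<in>W. E w u} \<le> c" using psubset.prems by blast
    define W' where "W' = W - {u}"
    have "W' \<subset> W" unfolding W'_def using u by auto
    then obtain f' :: "'a \<Rightarrow> nat" where f': "inj_on f' W'"
      "\<forall>v\<in>W'. card {x\<in>W'. E x v \<and> f' x < f' v} \<le> c"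
      using psubset.IH psubset.prems(1) by (meson psubset_imp_subset subset_trans)
    define f where "f = f'(u := Suc (Max (f' ` W')))"
    have finite_W': "finite W'" using psubset.hyps unfolding W'_def by simp
    have last: "f v < f u" if "v \<in> W'" for v
      using that finite_W' unfolding f_def W'_def by (simp add: le_imp_less_Suc)
    have same: "f v = f' v" if "v \<in> W'" for v
      using that unfolding f_def W'_def by simp
    have "inj_on f W"
    proof -
      have "W = insert u W'" unfolding W'_def using u by auto
      moreover have "inj_on f W'" using f'(1) same inj_on_cong by blast
      moreover have "f u \<notin> f ` W'" using last by fastforce
      ultimately show ?thesis using inj_on_insert[of f u W'] by blast
    qed
    moreover have "card {x\<in>W. E x v \<and> f x < f v} \<le> c" if v: "v \<in> W" for v
    proof (cases "v = u")
      case True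
      have "card {x\<in>W. E x v \<and> f x < f v} \<le> card {w\<in>W. E w u}"
        using psubset.hyps True by (intro card_mono) auto
      with u(2) show ?thesis by simp
    next
      case False
      then have "v \<in> W'" using v unfolding W'_def by simp
      then have "{x\<in>W. E x v \<and> f x < f v} = {x\<in>W'. E x v \<and> f' x < f' v}"
        using last same unfolding W'_def by fastforce
      with f'(2) \<open>v \<in> W'\<close> show ?thesis by simp
    qed
    ultimately show ?thesis by blast
  qed simp
qed

context finite_graph
begin

lemma degeneracy_eq_0_iff: "degeneracy (V, E) = 0 \<longleftrightarrow> (\<forall>x y. \<not> E x y)"
proof
  assume deg: "degeneracy (V, E) = 0"
  obtain f :: "'a \<Rightarrow> nat" where f: "inj_on f V"
    and earlier: "\<forall>v\<in>V. card {u\<in>V. E u v \<and> f u < f v} \<le> degeneracy (V, E)"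
    using degeneracy_ordering[OF finite_V] by blast
  have no_earlier: "\<not> E x y" if "f x < f y" for x y
  proof
    assume "E x y"
    then have "x \<in> {u\<in>V. E u y \<and> f u < f y}" and "y \<in> V" using that edgeD by auto
    then show False using earlier deg finite_V by fastforce
  qed
  show "\<forall>x y. \<not> E x y"
  proof (intro allI notI)
    fix x y assume xy: "E x y"
    then have "f x \<noteq> f y" using f edgeD unfolding inj_on_def by blast
    then show False using no_earlier[of x y] no_earlier[of y x] xy edge_sym by fastforce
  qed
next
  assume "\<forall>x y. \<not> E x y"
  moreover obtain f :: "'a \<Rightarrow> nat" where "inj_on f V"
    using finite_V finite_imp_inj_to_nat_seg by blast
  ultimately show "degeneracy (V, E) = 0"
    using degeneracy_le[of f V E 0] by simp
qed

lemma obtain_dense_subset: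
  assumes "1 \<le> degeneracy (V, E)"
  obtains U where "U \<subseteq> V" and "U \<noteq> {}" and "\<forall>u\<in>U. degeneracy (V, E) \<le> card {w\<in>U. E u w}"
proof (rule ccontr)
  assume no_dense: "\<not> thesis"
  note dense = that
  have "\<exists>u\<in>U. card {w\<in>U. E w u} \<le> degeneracy (V, E) - 1" if U: "U \<subseteq> V" "U \<noteq> {}" for U
  proof -
    obtain u where u: "u \<in> U" "card {w\<in>U. E u w} < degeneracy (V, E)"
      using no_dense dense U by (meson not_le)
    have "{w\<in>U. E u w} = {w\<in>U. E w u}" using edge_sym by blast
    with u(2) have "card {w\<in>U. E w u} \<le> degeneracy (V, E) - 1" by simp
    with u(1) show ?thesis by blast
  qed
  then obtain f :: "'a \<Rightarrow> nat" where "inj_on f V"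
    "\<forall>v\<in>V. card {u\<in>V. E u v \<and> f u < f v} \<le> degeneracy (V, E) - 1"
    using exists_ordering_few_earlier[OF finite_V, of E] by blast
  then have "degeneracy (V, E) \<le> degeneracy (V, E) - 1" by (rule degeneracy_le)
  with assms show False by simp
qed

end

section \<open>The flipper's strategy\<close>

locale ordered_graph = finite_graph V E for V :: "'a set" and E +
  fixes f :: "'a \<Rightarrow> nat"
  assumes inj_f: "inj_on f V"
begin

definition earlier_nbrs :: "'a \<Rightarrow> 'a set" where
  "earlier_nbrs v = {u\<in>V. E u v \<and> f u < f v}"

definition cut_earlier :: "'a graph \<Rightarrow> 'a \<Rightarrow> bool" where
  "cut_earlier H v \<longleftrightarrow> (\<exists>u\<in>earlier_nbrs v. \<not> snd H v u)"

definition isolation_set :: "'a graph \<Rightarrow> 'a \<Rightarrow> 'a set" where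
  "isolation_set H v =
     (if cut_earlier H v then insert v {u\<in>earlier_nbrs v. snd H v u} else {v})"

text \<open>
  Once an earlier neighbour of v is cut off from v, the flipper cuts off the others too, so the
  runner moves forward; otherwise the runner moves backward, or forward to a vertex of which v is
  now a cut-off earlier neighbour. Ranking the first kind of position below the second, by f
  decreasing resp. increasing, makes every move decrease the potential.
\<close>

definition potential :: "'a graph \<Rightarrow> 'a \<Rightarrow> nat" where
  "potential H v = (if cut_earlier H v then Suc (Max (f ` V)) - f v else Suc (Max (f ` V)) + f v)"

lemma card_isolation_set_le:
  assumes "\<forall>v\<in>V. card (earlier_nbrs v) \<le> d" and "1 \<le> d" and "v \<in> V"
  shows "card (isolation_set H v) \<le> d"
proof (cases "cut_earlier H v")
  case True
  have "finite (earlier_nbrs v)" using finite_V unfolding earlier_nbrs_def by simp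
  moreover have "{u\<in>earlier_nbrs v. snd H v u} \<subset> earlier_nbrs v"
    using True unfolding cut_earlier_def by auto
  ultimately have "card {u\<in>earlier_nbrs v. snd H v u} < card (earlier_nbrs v)"
    by (rule psubset_card_mono)
  moreover have "card (isolation_set H v) \<le> Suc (card {u\<in>earlier_nbrs v. snd H v u})"
    using True unfolding isolation_set_def by (simp add: card_insert_le_m1)
  ultimately show ?thesis using assms(1,3) by fastforce
next
  case False
  with assms(2) show ?thesis unfolding isolation_set_def by simp
qed

lemma isolation_set_subset: "v \<in> V \<Longrightarrow> isolation_set H v \<subseteq> V"
  unfolding isolation_set_def earlier_nbrs_def by auto

lemma potential_decreases:
  assumes v: "v \<in> V" and H: "\<forall>u. snd H v u \<longrightarrow> E v u"
    and v': "snd H v v'" "v' \<notin> isolation_set H v"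
  shows "potential (V, remove_edges_at (isolation_set H v) E) v' < potential H v"
proof -
  let ?H' = "(V, remove_edges_at (isolation_set H v) E)"
  have e: "E v v'" and "v' \<in> V" using H v'(1) edgeD by auto
  have M: "f v < Suc (Max (f ` V))" "f v' < Suc (Max (f ` V))"
    using v \<open>v' \<in> V\<close> finite_V by (simp_all add: le_imp_less_Suc)
  have "f v \<noteq> f v'"
    using inj_f v \<open>v' \<in> V\<close> e edgeD unfolding inj_on_def by blast
  then consider (later) "f v < f v'" | (earlier) "f v' < f v" by linarith
  then show ?thesis
  proof cases
    case later
    have "v \<in> earlier_nbrs v'" using v e edge_sym later unfolding earlier_nbrs_def by auto
    moreover have "v \<in> isolation_set H v" unfolding isolation_set_def by simp
    ultimately have "cut_earlier ?H' v'" unfolding cut_earlier_def remove_edges_at_def by auto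
    with later M show ?thesis unfolding potential_def by auto
  next
    case earlier
    have "\<not> cut_earlier H v"
    proof
      assume "cut_earlier H v"
      moreover have "v' \<in> earlier_nbrs v"
        using \<open>v' \<in> V\<close> e edge_sym earlier unfolding earlier_nbrs_def by auto
      ultimately show False using v' unfolding isolation_set_def by simp
    qed
    with earlier M show ?thesis unfolding potential_def by auto
  qed
qed

lemma flipper_wins_from:
  assumes flips: "\<And>H v. v \<in> V \<Longrightarrow> is_flip k (V, E) (V, remove_edges_at (isolation_set H v) E)"
  shows "v \<in> V \<Longrightarrow> \<forall>u. snd H v u \<longrightarrow> E v u \<Longrightarrow> flipper_wins (V, E) k H v"
proof (induction "potential H v" arbitrary: H v rule: less_induct)
  case less
  let ?H' = "(V, remove_edges_at (isolation_set H v) E)"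
  show ?case
  proof (rule flipper_wins.step[OF flips[OF less.prems(1)]], intro allI impI)
    fix v' assume "v' = v \<or> snd H v v'"
    show "isolated ?H' v' \<or> flipper_wins (V, E) k ?H' v'"
    proof (cases "v' \<in> isolation_set H v")
      case True
      then show ?thesis unfolding isolated_def remove_edges_at_def by simp
    next
      case False
      moreover have "v \<in> isolation_set H v" unfolding isolation_set_def by simp
      ultimately have "snd H v v'" using \<open>v' = v \<or> snd H v v'\<close> by auto
      then have "v' \<in> V" using less.prems(2) edgeD by blast
      moreover have "\<forall>u. snd ?H' v' u \<longrightarrow> E v' u" unfolding remove_edges_at_def by simp
      ultimately show ?thesis
        using less.hyps potential_decreases[OF less.prems \<open>snd H v v'\<close> False] by blast
    qed
  qed
qed

end

context finite_graph
begin

lemma flipper_wins_degeneracy: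
  assumes no_Ktt: "\<not> contains_Ktt (V, E) t"
  shows "flipper_has_winning_strategy (V, E) ((degeneracy (V, E) + 1) ^ t)"
proof (cases "\<forall>x y. \<not> E x y")
  case True
  then have "degeneracy (V, E) = 0" using degeneracy_eq_0_iff by simp
  moreover have "flipper_wins (V, E) 1 (V, E) v" for v
    using is_flip_self[of 1] True by (intro flipper_wins.step[of _ _ "(V, E)"]) (auto simp: isolated_def)
  ultimately show ?thesis unfolding flipper_has_winning_strategy_def by simp
next
  case False
  then obtain x y where "E x y" by blast
  then have "contains_Ktt (V, E) 1"
    unfolding contains_Ktt_def using edgeD by (intro exI[of _ "{x}"] exI[of _ "{y}"]) auto
  with no_Ktt have "t \<noteq> 1" by auto
  with not_contains_Ktt_pos[OF no_Ktt] have t: "2 \<le> t" by linarith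
  have "degeneracy (V, E) \<noteq> 0" using False degeneracy_eq_0_iff by blast
  then have d: "1 \<le> degeneracy (V, E)" by simp
  obtain f :: "'a \<Rightarrow> nat" where f: "inj_on f V"
    and earlier: "\<forall>v\<in>V. card {u\<in>V. E u v \<and> f u < f v} \<le> degeneracy (V, E)"
    using degeneracy_ordering[OF finite_V] by blast
  interpret ordered_graph V E f by unfold_locales (rule f)
  have "flipper_wins (V, E) ((degeneracy (V, E) + 1) ^ t) (V, E) v" if "v \<in> V" for v
  proof (rule flipper_wins_from[OF _ that])
    fix H v assume "v \<in> V"
    then show "is_flip ((degeneracy (V, E) + 1) ^ t) (V, E) (V, remove_edges_at (isolation_set H v) E)"
      using is_flip_remove_edges_at_small[OF no_Ktt t] isolation_set_subset
        card_isolation_set_le[OF _ d] earlier unfolding earlier_nbrs_def by blast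
  qed simp
  then show ?thesis unfolding flipper_has_winning_strategy_def by simp
qed

end

section \<open>The runner's strategy\<close>

lemma partition_part_meets_large:
  assumes "finite V" and P: "partition_on V P" "card P \<le> k"
    and "A \<subseteq> V" and "(t - 1) * k < card A"
  shows "\<exists>Q\<in>P. t \<le> card (A \<inter> Q)"
proof (rule ccontr)
  assume "\<not> ?thesis"
  then have small: "card (A \<inter> Q) \<le> t - 1" if "Q \<in> P" for Q using that by force
  have "finite P" using assms(1) P(1) by (rule finite_elements)
  have "A = (\<Union>Q\<in>P. A \<inter> Q)" using assms(4) partition_onD1[OF P(1)] by auto
  then have "card A \<le> (\<Sum>Q\<in>P. card (A \<inter> Q))"
    using card_UN_le[OF \<open>finite P\<close>, of "\<lambda>Q. A \<inter> Q"] by simp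
  also have "\<dots> \<le> card P * (t - 1)" using sum_bounded_above[of P _ "t - 1"] small by simp
  also have "\<dots> \<le> (t - 1) * k" using P(2) by simp
  finally show False using assms(5) by simp
qed

lemma card_le_common_plus_exceptions:
  assumes "finite X" and "finite A"
  shows "card X \<le> card {x\<in>X. \<forall>a\<in>A. P a x} + (\<Sum>a\<in>A. card {x\<in>X. \<not> P a x})"
proof -
  have "card X \<le> card ({x\<in>X. \<forall>a\<in>A. P a x} \<union> (\<Union>a\<in>A. {x\<in>X. \<not> P a x}))"
    using assms by (intro card_mono) auto
  also have "\<dots> \<le> card {x\<in>X. \<forall>a\<in>A. P a x} + card (\<Union>a\<in>A. {x\<in>X. \<not> P a x})"
    by (rule card_Un_le)
  also have "card (\<Union>a\<in>A. {x\<in>X. \<not> P a x}) \<le> (\<Sum>a\<in>A. card {x\<in>X. \<not> P a x})"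
    using assms(2) by (rule card_UN_le)
  finally show ?thesis by simp
qed

lemma runner_threshold_le:
  fixes t k :: nat
  assumes "1 \<le> t" and "1 \<le> k"
  shows "(t + 1) * ((t - 1) * k + 1) + t \<le> 2 * t ^ 2 * k + 1"
proof -
  obtain s j where "t = Suc s" "k = Suc j" using assms by (metis Suc_le_D One_nat_def)
  then show ?thesis by (simp add: algebra_simps power2_eq_square)
qed

context finite_graph
begin

lemma winning_width_pos:
  assumes "V \<noteq> {}" and "flipper_has_winning_strategy (V, E) k"
  shows "1 \<le> k"
proof (rule ccontr)
  assume "\<not> 1 \<le> k"
  obtain v where "v \<in> V" using assms(1) by blast
  with assms(2) have "flipper_wins (V, E) k (V, E) v"
    unfolding flipper_has_winning_strategy_def by simp
  then obtain H where "is_flip k (V, E) H" by (cases rule: flipper_wins.cases) auto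
  then obtain P where P: "partition_on V P" "card P \<le> k" unfolding is_flip_def by auto
  have "finite P" using finite_V P(1) by (rule finite_elements)
  moreover have "card P = 0" using P(2) \<open>\<not> 1 \<le> k\<close> by simp
  ultimately have "P = {}" by simp
  with P(1) assms(1) show False by (simp add: partition_on_def)
qed

lemma contains_Ktt_if_few_flipped_nbrs:
  assumes U: "U \<subseteq> V" and A: "A \<subseteq> U" "card A = t"
    and dense: "\<forall>a\<in>A. D \<le> card {w\<in>U. E a w}"
    and few: "\<forall>a\<in>A. card {w\<in>U. w \<noteq> a \<and> (E a w \<noteq> (w \<in> W))} < m"
    and big: "(t + 1) * m + t \<le> D + 1"
  shows "contains_Ktt (V, E) t"
proof (cases "t = 0")
  case True
  then show ?thesis using not_contains_Ktt_pos[of "(V, E)" t] by auto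
next
  case False
  define flipped where "flipped a = {w\<in>U. w \<noteq> a \<and> (E a w \<noteq> (w \<in> W))}" for a
  define C where "C = {w\<in>U \<inter> W. \<forall>a\<in>A. E a w}"
  have finite_U: "finite U" using U finite_V by (rule finite_subset)
  have finite_A: "finite A" using A finite_U finite_subset by blast
  obtain a where a: "a \<in> A" using False A(2) by fastforce
  have "D \<le> card {w\<in>U. E a w}" using dense a by blast
  also have "\<dots> \<le> card (flipped a \<union> (U \<inter> W))"
    using finite_U edgeD unfolding flipped_def by (intro card_mono) auto
  also have "\<dots> \<le> card (flipped a) + card (U \<inter> W)" by (rule card_Un_le)
  finally have UW: "D + 1 \<le> m + card (U \<inter> W)" using few a unfolding flipped_def by fastforce
  have "card (U \<inter> W) \<le> card C + (\<Sum>a\<in>A. card {w\<in>U \<inter> W. \<not> E a w})"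
    unfolding C_def using finite_U finite_A by (intro card_le_common_plus_exceptions) auto
  also have "(\<Sum>a\<in>A. card {w\<in>U \<inter> W. \<not> E a w}) \<le> t * m"
  proof -
    have "card {w\<in>U \<inter> W. \<not> E a w} \<le> m" if "a \<in> A" for a
    proof -
      have "card {w\<in>U \<inter> W. \<not> E a w} \<le> card (insert a (flipped a))"
        using finite_U unfolding flipped_def by (intro card_mono) auto
      also have "\<dots> \<le> m"
        using few that unfolding flipped_def by (intro card_insert_le_m1) auto
      finally show ?thesis .
    qed
    then show ?thesis using sum_bounded_above[of A _ m] A(2) by (simp add: mult.commute)
  qed
  finally have "t \<le> card C" using UW big by (simp add: algebra_simps)
  then obtain B where B: "B \<subseteq> C" "card B = t" by (meson obtain_subset_with_card_n)
  have "\<forall>a\<in>A. \<forall>b\<in>B. E a b" using B(1) unfolding C_def by blast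
  moreover have "A \<inter> B = {}" "A \<subseteq> V" "B \<subseteq> V"
    using calculation edgeD A U B(1) unfolding C_def by blast+
  ultimately show ?thesis unfolding contains_Ktt_def using A(2) B(2) by auto
qed

lemma runner_escapes:
  assumes no_Ktt: "\<not> contains_Ktt (V, E) t" and flip: "is_flip k (V, E) H'"
    and U: "U \<subseteq> V" and dense: "\<forall>u\<in>U. D \<le> card {w\<in>U. E u w}"
    and A: "A \<subseteq> U" "(t - 1) * k < card A"
    and big: "(t + 1) * ((t - 1) * k + 1) + t \<le> D + 1"
  shows "\<exists>a\<in>A. (t - 1) * k < card {w\<in>U. snd H' a w}"
proof (rule ccontr)
  assume "\<not> ?thesis"
  then have few: "card {w\<in>U. snd H' a w} < (t - 1) * k + 1" if "a \<in> A" for a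
    using that by fastforce
  obtain P where P: "partition_on V P" "card P \<le> k"
    and uniform: "\<forall>Q\<in>P. \<exists>W. \<forall>a\<in>Q. \<forall>y. snd H' a y \<longleftrightarrow> y \<in> V \<and> a \<noteq> y \<and> (E a y \<noteq> (y \<in> W))"
    using is_flip_partition_uniform[OF flip] by blast
  obtain Q where "Q \<in> P" "t \<le> card (A \<inter> Q)"
    using partition_part_meets_large[OF finite_V P _ A(2)] A(1) U by blast
  moreover obtain W where W: "\<forall>a\<in>Q. \<forall>y. snd H' a y \<longleftrightarrow> y \<in> V \<and> a \<noteq> y \<and> (E a y \<noteq> (y \<in> W))"
    using uniform \<open>Q \<in> P\<close> by blast
  ultimately obtain A' where A': "A' \<subseteq> A \<inter> Q" "card A' = t" by (meson obtain_subset_with_card_n)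
  have "card {w\<in>U. w \<noteq> a \<and> (E a w \<noteq> (w \<in> W))} < (t - 1) * k + 1" if "a \<in> A'" for a
  proof -
    have "{w\<in>U. snd H' a w} = {w\<in>U. w \<noteq> a \<and> (E a w \<noteq> (w \<in> W))}"
      using W that A'(1) U by auto
    moreover have "a \<in> A" using that A'(1) by blast
    ultimately show ?thesis using few by metis
  qed
  moreover have "\<forall>a\<in>A'. D \<le> card {w\<in>U. E a w}" using dense A'(1) A(1) by blast
  ultimately have "contains_Ktt (V, E) t"
    using contains_Ktt_if_few_flipped_nbrs[OF U _ A'(2)] A'(1) A(1) big by blast
  with no_Ktt show False ..
qed

lemma runner_survives:
  assumes no_Ktt: "\<not> contains_Ktt (V, E) t"
    and U: "U \<subseteq> V" and dense: "\<forall>u\<in>U. D \<le> card {w\<in>U. E u w}"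
    and big: "(t + 1) * ((t - 1) * k + 1) + t \<le> D + 1"
  shows "flipper_wins (V, E) k H v \<Longrightarrow> v \<in> U \<Longrightarrow> (t - 1) * k < card {w\<in>U. snd H v w} \<Longrightarrow> False"
proof (induction rule: flipper_wins.induct)
  case (step H' v H)
  obtain a where a: "a \<in> U" "snd H v a" and many: "(t - 1) * k < card {w\<in>U. snd H' a w}"
    using runner_escapes[OF no_Ktt step.hyps(1) U dense _ step.prems(2) big] by blast
  then have "\<not> isolated H' a" unfolding isolated_def by fastforce
  with step.IH a many show False by blast
qed

lemma degeneracy_lt_winning_width:
  assumes no_Ktt: "\<not> contains_Ktt (V, E) t" and "V \<noteq> {}"
    and win: "flipper_has_winning_strategy (V, E) k"
  shows "degeneracy (V, E) < 2 * t ^ 2 * k"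
proof (rule ccontr)
  assume "\<not> ?thesis"
  then have D: "2 * t ^ 2 * k \<le> degeneracy (V, E)" by simp
  have "1 \<le> k" using winning_width_pos[OF assms(2) win] .
  moreover have "t \<noteq> 0" using not_contains_Ktt_pos[OF no_Ktt] by simp
  ultimately have big: "(t + 1) * ((t - 1) * k + 1) + t \<le> degeneracy (V, E) + 1"
    and "1 \<le> degeneracy (V, E)"
    using runner_threshold_le[of t k] D by simp_all
  then obtain U where U: "U \<subseteq> V" "U \<noteq> {}"
    and dense: "\<forall>u\<in>U. degeneracy (V, E) \<le> card {w\<in>U. E u w}"
    using obtain_dense_subset by blast
  obtain u where u: "u \<in> U" using U(2) by blast
  have "(t - 1) * k + 1 \<le> (t + 1) * ((t - 1) * k + 1)" by simp
  with big \<open>t \<noteq> 0\<close> have "(t - 1) * k < degeneracy (V, E)" by linarith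
  also have "\<dots> \<le> card {w\<in>U. snd (V, E) u w}" using dense u by simp
  finally have "(t - 1) * k < card {w\<in>U. snd (V, E) u w}" .
  moreover have "flipper_wins (V, E) k (V, E) u"
    using win u U(1) unfolding flipper_has_winning_strategy_def by auto
  ultimately show False using runner_survives[OF no_Ktt U(1) dense big] u by blast
qed

end

section \<open>Flip-width versus degeneracy\<close>

lemma fw1_bounds:
  assumes "fin_graph G" and "\<not> contains_Ktt G t"
  shows fw1_le_degeneracy_power: "fw1 G \<le> (degeneracy G + 1) ^ t"
    and degeneracy_lt_fw1: "fst G \<noteq> {} \<Longrightarrow> degeneracy G < 2 * t ^ 2 * fw1 G"
proof -
  interpret finite_graph "fst G" "snd G" using assms(1) by unfold_locales simp
  have win: "flipper_has_winning_strategy G ((degeneracy G + 1) ^ t)"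
    using flipper_wins_degeneracy assms(2) by simp
  then show "fw1 G \<le> (degeneracy G + 1) ^ t" unfolding fw1_def by (rule Least_le)
  from win have "flipper_has_winning_strategy G (fw1 G)" unfolding fw1_def by (rule LeastI)
  then show "fst G \<noteq> {} \<Longrightarrow> degeneracy G < 2 * t ^ 2 * fw1 G"
    using degeneracy_lt_winning_width assms(2) by simp
qed

lemma bounded_fw1_iff_bounded_degeneracy:
  assumes graphs: "\<forall>G\<in>C. fin_graph G" and "weakly_sparse C"
  shows "(\<exists>k. \<forall>G\<in>C. fw1 G \<le> k) \<longleftrightarrow> (\<exists>d. \<forall>G\<in>C. degeneracy G \<le> d)"
proof -
  obtain t where no_Ktt: "\<forall>G\<in>C. \<not> contains_Ktt G t"
    using assms(2) unfolding weakly_sparse_def by blast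
  show ?thesis
  proof
    assume "\<exists>k. \<forall>G\<in>C. fw1 G \<le> k"
    then obtain k where k: "\<forall>G\<in>C. fw1 G \<le> k" by blast
    have "degeneracy G \<le> 2 * t ^ 2 * k" if "G \<in> C" for G
    proof (cases "fst G = {}")
      case True
      interpret finite_graph "fst G" "snd G" using graphs that by unfold_locales simp
      from True have "\<forall>x y. \<not> snd G x y" using edgeD by blast
      then have "degeneracy (fst G, snd G) = 0" using degeneracy_eq_0_iff by blast
      then show ?thesis by simp
    next
      case False
      then have "degeneracy G < 2 * t ^ 2 * fw1 G" using degeneracy_lt_fw1 graphs no_Ktt that by blast
      also have "\<dots> \<le> 2 * t ^ 2 * k" using k that by simp
      finally show ?thesis by simp
    qed
    then show "\<exists>d. \<forall>G\<in>C. degeneracy G \<le> d" by blast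
  next
    assume "\<exists>d. \<forall>G\<in>C. degeneracy G \<le> d"
    then obtain d where d: "\<forall>G\<in>C. degeneracy G \<le> d" by blast
    have "fw1 G \<le> (d + 1) ^ t" if "G \<in> C" for G
    proof -
      have "fw1 G \<le> (degeneracy G + 1) ^ t" using fw1_le_degeneracy_power graphs no_Ktt that by blast
      also have "\<dots> \<le> (d + 1) ^ t" using d that by (simp add: power_mono)
      finally show ?thesis .
    qed
    then show "\<exists>k. \<forall>G\<in>C. fw1 G \<le> k" by blast
  qed
qed

theorem mainTheorem7:
  shows "(\<forall>(G :: 'a graph) (t :: nat). fin_graph G \<and> fst G \<noteq> {} \<and> \<not> contains_Ktt G t \<longrightarrow>
            real (degeneracy G) / (2 * real t ^ 2) < real (fw1 G) \<and>
            fw1 G \<le> (degeneracy G + 1) ^ t)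
       \<and> (\<forall>C :: 'a graph set. (\<forall>G \<in> C. fin_graph G) \<and> weakly_sparse C \<longrightarrow>
            ((\<exists>k. \<forall>G \<in> C. fw1 G \<le> k) \<longleftrightarrow> (\<exists>d. \<forall>G \<in> C. degeneracy G \<le> d)))"
proof (intro conjI allI impI)
  fix G :: "'a graph" and t :: nat
  assume G: "fin_graph G \<and> fst G \<noteq> {} \<and> \<not> contains_Ktt G t"
  then have "t \<noteq> 0" using not_contains_Ktt_pos by blast
  have "degeneracy G < 2 * t ^ 2 * fw1 G" using degeneracy_lt_fw1 G by blast
  then have "real (degeneracy G) < real (2 * t ^ 2 * fw1 G)" by (simp only: of_nat_less_iff)
  then have "real (degeneracy G) < real (fw1 G) * (2 * real t ^ 2)" by (simp add: mult_ac)
  with \<open>t \<noteq> 0\<close> show "real (degeneracy G) / (2 * real t ^ 2) < real (fw1 G)"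
    by (simp add: pos_divide_less_eq)
  show "fw1 G \<le> (degeneracy G + 1) ^ t" using fw1_le_degeneracy_power G by blast
next
  fix C :: "'a graph set"
  assume "(\<forall>G\<in>C. fin_graph G) \<and> weakly_sparse C"
  then show "(\<exists>k. \<forall>G\<in>C. fw1 G \<le> k) \<longleftrightarrow> (\<exists>d. \<forall>G\<in>C. degeneracy G \<le> d)"
    using bounded_fw1_iff_bounded_degeneracy by blast
qed

end
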